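(* Let $p/q\in\mathcal S$. There exists a lattice $\Lambda_{p,q}\in C(p,q)$ such that: (1) $|\Lambda_{p,q}|=\min\{|\Lambda|:\Lambda\in C(p,q)\}=\sqrt q$; (2) $\det(\Lambda_{p,q})=\min\{\det(\Lambda):\Lambda\in C(p,q)\}=p$; (3) the norm form of $\Lambda_{p,q}$ with respect to a minimal basis (a basis consisting of two minimal vectors) is $Q_{p,q}(x,y)=qx^2+2xy\sqrt{q^2-p^2}+qy^2$; (4) for every $\Lambda\in C(p,q)$ there is $U\in O_2(\mathbb R)$ with $\Lambda=\sqrt{\det(\Lambda)/p}\,U\Lambda_{p,q}$, so that $\frac{\det(\Lambda)}{p}Q_{p,q}(x,y)$ is the norm form of $\Lambda$ with respect to a minimal basis; (5) for every $\Lambda\in C(p,q)$ and $\Re(s)>1$, $E_\Lambda(s)=\left(\frac{p}{\det\Lambda}\right)^s\sum'_{(x,y)\in\mathbb Z^2}Q_{p,q}(x,y)^{-s}$, and hence for each real $s>1$, $\Lambda_{p,q}$ maximizes $E_\Lambda(s)$ over $\Lambda\in C(p,q)$. Such a lattice $\Lambda_{p,q}$ is unique up to rotation by an orthogonal matrix with rational entries.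
   Context: All lattices are full-rank lattices in $\mathbb R^2$. For a lattice $\Lambda$, $|\Lambda|=\min_{x\in\Lambda\setminus\{0\}}\|x\|$ (Euclidean norm) and $S(\Lambda)=\{x\in\Lambda:\|x\|=|\Lambda|\}$; $\Lambda$ is well-rounded (WR) if $S(\Lambda)$ spans $\mathbb R^2$. $\mathrm{WR}(\mathbb Z^2)$ is the set of full-rank WR sublattices of $\mathbb Z^2$. For a WR lattice $\Lambda$, $\theta(\Lambda)\in[\pi/3,\pi/2]$ is the angle between two linearly independent minimal vectors chosen so that the angle is at most $\pi/2$; equivalently $\sin\theta(\Lambda)=\det(\Lambda)/|\Lambda|^2$. For $q\in\mathbb Z_{>0}$ let $\mathcal S_q=\{p/q\in\mathbb Q\cap(\sqrt3/2,1):\gcd(p,q)=1,\ \sqrt{q^2-p^2}\in\mathbb Z\}$ and $\mathcal S=\bigcup_{q}\mathcal S_q\cup\{1\}$, where $1$ is written as $p/q$ with $p=q=1$; elements of $\mathcal S$ are written in lowest terms. For $p/q\in\mathcal S$, $C(p,q)=\{\Lambda\in\mathrm{WR}(\mathbb Z^2):\sin\theta(\Lambda)=p/q\}$. The Epstein zeta function of a lattice $\Lambda$ is $E_\Lambda(s)=\sum'_{x\in\Lambda}\|x\|^{-2s}$, where $\sum'$ denotes summation over $(\Lambda\setminus\{0\})/\{\pm1\}$ (similarly $\sum'_{(x,y)\in\mathbb Z^2}$ sums over $(\mathbb Z^2\setminus\{0\})/\{\pm1\}$). *)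

theory Defs
  imports "HOL-Analysis.Analysis"
begin

text \<open>Vectors of R^2 are modelled as pairs real \<times> real (Euclidean norm and inner product).\<close>

definition det2 :: "real \<times> real \<Rightarrow> real \<times> real \<Rightarrow> real" where
  "det2 a b = fst a * snd b - snd a * fst b"

definition lat_gen :: "real \<times> real \<Rightarrow> real \<times> real \<Rightarrow> (real \<times> real) set" where
  "lat_gen a b = {of_int i *\<^sub>R a + of_int j *\<^sub>R b | i j. True}"

definition lattice_basis :: "(real \<times> real) set \<Rightarrow> real \<times> real \<Rightarrow> real \<times> real \<Rightarrow> bool" where
  "lattice_basis L a b \<longleftrightarrow> det2 a b \<noteq> 0 \<and> L = lat_gen a b"

definition is_lattice :: "(real \<times> real) set \<Rightarrow> bool" where
  "is_lattice L \<longleftrightarrow> (\<exists>a b. lattice_basis L a b)"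

definition lat_det :: "(real \<times> real) set \<Rightarrow> real" where
  "lat_det L = (THE d. \<exists>a b. lattice_basis L a b \<and> d = \<bar>det2 a b\<bar>)"

definition lat_min :: "(real \<times> real) set \<Rightarrow> real" where
  "lat_min L = Inf (norm ` (L - {0}))"

definition min_vecs :: "(real \<times> real) set \<Rightarrow> (real \<times> real) set" where
  "min_vecs L = {x \<in> L. norm x = lat_min L}"

definition well_rounded :: "(real \<times> real) set \<Rightarrow> bool" where
  "well_rounded L \<longleftrightarrow> is_lattice L \<and> span (min_vecs L) = UNIV"

text \<open>theta(L): angle in [pi/3, pi/2] between two linearly independent minimal vectors
  (sign chosen so that the angle is at most pi/2).\<close>
definition wr_theta :: "(real \<times> real) set \<Rightarrow> real" where
  "wr_theta L = (THE \<theta>. \<exists>x\<in>min_vecs L. \<exists>y\<in>min_vecs L. det2 x y \<noteq> 0 \<and>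
      \<theta> = arccos (\<bar>x \<bullet> y\<bar> / (norm x * norm y)))"

definition Z2 :: "(real \<times> real) set" where
  "Z2 = {(of_int m, of_int n) | m n. True}"

definition WR_Z2 :: "(real \<times> real) set set" where
  "WR_Z2 = {L. is_lattice L \<and> L \<subseteq> Z2 \<and> well_rounded L}"

definition in_S :: "nat \<Rightarrow> nat \<Rightarrow> bool" where
  "in_S p q \<longleftrightarrow> (p = 1 \<and> q = 1) \<or>
     (0 < p \<and> 0 < q \<and> coprime p q \<and> sqrt 3 / 2 < real p / real q \<and> real p / real q < 1 \<and>
      (\<exists>r::nat. q^2 - p^2 = r^2))"

definition C_set :: "nat \<Rightarrow> nat \<Rightarrow> (real \<times> real) set set" where
  "C_set p q = {L \<in> WR_Z2. sin (wr_theta L) = real p / real q}"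

definition minimal_basis :: "(real \<times> real) set \<Rightarrow> real \<times> real \<Rightarrow> real \<times> real \<Rightarrow> bool" where
  "minimal_basis L a b \<longleftrightarrow> lattice_basis L a b \<and> a \<in> min_vecs L \<and> b \<in> min_vecs L"

definition norm_form :: "real \<times> real \<Rightarrow> real \<times> real \<Rightarrow> real \<Rightarrow> real \<Rightarrow> real" where
  "norm_form a b x y = (norm (x *\<^sub>R a + y *\<^sub>R b))^2"

definition Qpq :: "nat \<Rightarrow> nat \<Rightarrow> real \<Rightarrow> real \<Rightarrow> real" where
  "Qpq p q x y = real q * x^2 + 2 * x * y * sqrt (real q^2 - real p^2) + real q * y^2"

text \<open>Sum over (A - {0}) / {+-1} of an (even) function f: sum over the classes {x, -x}.\<close>
definition sum_pm :: "('a::ab_group_add \<Rightarrow> complex) \<Rightarrow> 'a set \<Rightarrow> complex" where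
  "sum_pm f A = infsum (\<lambda>c. f (SOME x. x \<in> c)) {{x, -x} | x. x \<in> A - {0}}"

definition epstein :: "(real \<times> real) set \<Rightarrow> complex \<Rightarrow> complex" where
  "epstein L s = sum_pm (\<lambda>x. complex_of_real (norm x) powr (- 2 * s)) L"

definition Qpq_zeta :: "nat \<Rightarrow> nat \<Rightarrow> complex \<Rightarrow> complex" where
  "Qpq_zeta p q s = sum_pm (\<lambda>(x::int, y::int). complex_of_real (Qpq p q (of_int x) (of_int y)) powr (- s))
      (UNIV :: (int \<times> int) set)"

end

theory Submission
  imports Defs "HOL-Computational_Algebra.Nth_Powers"
begin

(*
  Let \<rho> = sqrt (q^2 - p^2).  Call (x, y) a (p,q)-basis of scale k if its Gram matrix is
  k [[q, \<rho>], [\<rho>, q]]; its norm form is then k Q_{p,q}.  The theorem rests on two facts.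

  (a) Every L in C(p,q) has a minimal basis that is a (p,q)-basis of an integer scale k \<ge> 1,
      and det L = k p, |L|^2 = k q.  Indeed two independent minimal vectors of a well-rounded
      integral lattice form a basis (rounding coordinates), whence sin \<theta>(L) = det L / |L|^2;
      the relation q det L = p |L|^2 between integers and gcd(p,q) = 1 give the scale k.
  (b) An integral (p,q)-basis of scale 1 with determinant p exists, coming from Euclid's
      parametrisation q = m^2 + n^2 of the primitive Pythagorean triple (p, \<rho>, q).

  The lattice \<Lambda>_{p,q} spanned by the basis of (b) lies in C(p,q), with |\<Lambda>| = sqrt q and
  det \<Lambda> = p.  The linear map sending the basis of (b) to the basis of (a) is sqrt k times an
  orthogonal map (with rational matrix if k = 1), and the Epstein zeta function, being a sum
  of the norm form over (Z^2 - 0)/\<plusminus>1, scales by k^{-s} (as an identity of sums, for all s).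
*)

section \<open>Plane geometry in terms of the 2x2 determinant\<close>

lemma norm_sq_prod: "(norm (x::real \<times> real))^2 = (fst x)^2 + (snd x)^2"
  by (cases x) (simp add: norm_Pair)

lemma inner_prod2: "(x::real \<times> real) \<bullet> y = fst x * fst y + snd x * snd y"
  by (cases x; cases y) simp

lemma det2_lagrange: "(x \<bullet> y)^2 + (det2 x y)^2 = (norm x)^2 * (norm (y::real \<times> real))^2"
  unfolding norm_sq_prod inner_prod2 det2_def by (simp add: power2_eq_square algebra_simps)

lemma det2_add_left: "det2 (u + v) w = det2 u w + det2 v w"
  unfolding det2_def by (simp add: algebra_simps)

lemma det2_add_right: "det2 w (u + v) = det2 w u + det2 w v"
  unfolding det2_def by (simp add: algebra_simps)

lemma det2_scale_left: "det2 (r *\<^sub>R u) w = r * det2 u w"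
  unfolding det2_def by (simp add: algebra_simps)

lemma det2_scale_right: "det2 w (r *\<^sub>R u) = r * det2 w u"
  unfolding det2_def by (simp add: algebra_simps)

lemma det2_self: "det2 u u = 0"
  unfolding det2_def by simp

lemma det2_coordinates:
  assumes "det2 a b \<noteq> 0"
  shows "v = (det2 v b / det2 a b) *\<^sub>R a + (det2 a v / det2 a b) *\<^sub>R b"
proof -
  have "det2 a b * fst v = det2 v b * fst a + det2 a v * fst b"
       "det2 a b * snd v = det2 v b * snd a + det2 a v * snd b"
    unfolding det2_def by (simp_all add: algebra_simps)
  then show ?thesis using assms
    by (cases v) (auto simp: prod_eq_iff field_simps)
qed

lemma det2_coordinates_unique:
  assumes "det2 a b \<noteq> 0" "\<alpha> *\<^sub>R a + \<beta> *\<^sub>R b = 0"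
  shows "\<alpha> = 0" "\<beta> = 0"
proof -
  have "det2 (\<alpha> *\<^sub>R a + \<beta> *\<^sub>R b) b = \<alpha> * det2 a b" "det2 a (\<alpha> *\<^sub>R a + \<beta> *\<^sub>R b) = \<beta> * det2 a b"
    by (simp_all add: det2_add_left det2_add_right det2_scale_left det2_scale_right det2_self)
  then show "\<alpha> = 0" "\<beta> = 0" using assms by (simp_all add: det2_def)
qed

lemma inner_comb:
  "(\<alpha> *\<^sub>R a + \<beta> *\<^sub>R b) \<bullet> (\<gamma> *\<^sub>R a + \<delta> *\<^sub>R b) =
     \<alpha> * \<gamma> * (a \<bullet> a) + (\<alpha> * \<delta> + \<beta> * \<gamma>) * (a \<bullet> b) + \<beta> * \<delta> * (b \<bullet> (b::real \<times> real))"
  by (simp add: inner_add_left inner_add_right inner_commute algebra_simps)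

lemma norm_sq_comb:
  "(norm (\<alpha> *\<^sub>R a + \<beta> *\<^sub>R b))^2 =
     \<alpha>^2 * (a \<bullet> a) + 2 * \<alpha> * \<beta> * (a \<bullet> b) + \<beta>^2 * (b \<bullet> (b::real \<times> real))"
  by (simp only: power2_norm_eq_inner inner_comb) (simp add: power2_eq_square algebra_simps)

section \<open>Lattices generated by two vectors\<close>

lemma lat_gen_mem: "of_int i *\<^sub>R a + of_int j *\<^sub>R b \<in> lat_gen a b"
  unfolding lat_gen_def by blast

lemma lat_gen_closed:
  assumes "u \<in> lat_gen a b" "v \<in> lat_gen a b"
  shows "of_int i *\<^sub>R u + of_int j *\<^sub>R v \<in> lat_gen a b"
proof -
  obtain i1 j1 where u: "u = of_int i1 *\<^sub>R a + of_int j1 *\<^sub>R b"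
    using assms(1) unfolding lat_gen_def by blast
  obtain i2 j2 where v: "v = of_int i2 *\<^sub>R a + of_int j2 *\<^sub>R b"
    using assms(2) unfolding lat_gen_def by blast
  have "of_int i *\<^sub>R u + of_int j *\<^sub>R v = of_int (i*i1 + j*i2) *\<^sub>R a + of_int (i*j1 + j*j2) *\<^sub>R b"
    unfolding u v by (simp add: algebra_simps scaleR_add_right)
  then show ?thesis using lat_gen_mem by metis
qed

lemma lat_gen_a: "a \<in> lat_gen a b"
  using lat_gen_mem[of 1 a 0 b] by simp

lemma lat_gen_b: "b \<in> lat_gen a b"
  using lat_gen_mem[of 0 a 1 b] by simp

lemma lat_gen_minus: "u \<in> lat_gen a b \<Longrightarrow> - u \<in> lat_gen a b"
  using lat_gen_closed[of u a b u "-1" 0] by simp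

lemma lat_gen_diff: "u \<in> lat_gen a b \<Longrightarrow> v \<in> lat_gen a b \<Longrightarrow> u - v \<in> lat_gen a b"
  using lat_gen_closed[of u a b v 1 "-1"] by simp

lemma lat_gen_subset:
  assumes "x \<in> lat_gen a b" "y \<in> lat_gen a b"
  shows "lat_gen x y \<subseteq> lat_gen a b"
  using lat_gen_closed[OF assms] unfolding lat_gen_def[of x y] by blast

lemma lat_gen_linear_image:
  assumes "linear f"
  shows "f ` lat_gen a b = lat_gen (f a) (f b)"
proof -
  have image: "f (of_int i *\<^sub>R a + of_int j *\<^sub>R b) = of_int i *\<^sub>R f a + of_int j *\<^sub>R f b"
    for i j :: int
    by (simp add: linear_add[OF assms] linear_scale[OF assms])
  show ?thesis
  proof
    show "f ` lat_gen a b \<subseteq> lat_gen (f a) (f b)"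
    proof
      fix z assume "z \<in> f ` lat_gen a b"
      then obtain i j where "z = f (of_int i *\<^sub>R a + of_int j *\<^sub>R b)"
        unfolding lat_gen_def by blast
      then show "z \<in> lat_gen (f a) (f b)" unfolding image by (simp add: lat_gen_mem)
    qed
    show "lat_gen (f a) (f b) \<subseteq> f ` lat_gen a b"
    proof
      fix z assume "z \<in> lat_gen (f a) (f b)"
      then obtain i j where "z = of_int i *\<^sub>R f a + of_int j *\<^sub>R f b"
        unfolding lat_gen_def by blast
      then show "z \<in> f ` lat_gen a b" unfolding image[symmetric] by (simp add: lat_gen_mem)
    qed
  qed
qed

lemma det2_lat_gen_members:
  assumes "c \<in> lat_gen a b" "d \<in> lat_gen a b"
  shows "\<exists>n::int. det2 c d = of_int n * det2 a b"
proof -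
  obtain i1 j1 where c: "c = of_int i1 *\<^sub>R a + of_int j1 *\<^sub>R b"
    using assms(1) unfolding lat_gen_def by blast
  obtain i2 j2 where d: "d = of_int i2 *\<^sub>R a + of_int j2 *\<^sub>R b"
    using assms(2) unfolding lat_gen_def by blast
  have "det2 c d = of_int (i1*j2 - j1*i2) * det2 a b"
    unfolding c d det2_def by (simp add: algebra_simps)
  then show ?thesis by blast
qed

text \<open>Hence all bases of a lattice have the same absolute determinant, so \<open>lat_det\<close> is
  well defined.\<close>
lemma lattice_basis_det_eq:
  assumes "lattice_basis L a b" "lattice_basis L c d"
  shows "\<bar>det2 a b\<bar> = \<bar>det2 c d\<bar>"
proof -
  from assms have L1: "L = lat_gen a b" and L2: "L = lat_gen c d" and d1: "det2 a b \<noteq> 0"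
    unfolding lattice_basis_def by auto
  obtain n where n: "det2 c d = of_int n * det2 a b"
    using det2_lat_gen_members[of c a b d] L1 L2 lat_gen_a lat_gen_b by metis
  obtain m where m: "det2 a b = of_int m * det2 c d"
    using det2_lat_gen_members[of a c d b] L1 L2 lat_gen_a lat_gen_b by metis
  have "(of_int (m * n) - 1) * det2 a b = 0" using n m by (simp add: algebra_simps)
  then have "real_of_int (m * n) = 1" using d1 by simp
  then have "m * n = 1" by linarith
  then have "\<bar>of_int n::real\<bar> = 1" using zmult_eq_1_iff by fastforce
  then show ?thesis using n by (simp add: abs_mult)
qed

lemma lat_det_eq:
  assumes "lattice_basis L a b"
  shows "lat_det L = \<bar>det2 a b\<bar>"
  unfolding lat_det_def
proof (rule the_equality)
  show "\<exists>a' b'. lattice_basis L a' b' \<and> \<bar>det2 a b\<bar> = \<bar>det2 a' b'\<bar>" using assms by blast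
next
  fix d assume "\<exists>a' b'. lattice_basis L a' b' \<and> d = \<bar>det2 a' b'\<bar>"
  then show "d = \<bar>det2 a b\<bar>" using lattice_basis_det_eq assms by metis
qed

definition coord_map :: "real \<times> real \<Rightarrow> real \<times> real \<Rightarrow> int \<times> int \<Rightarrow> real \<times> real" where
  "coord_map x y z = of_int (fst z) *\<^sub>R x + of_int (snd z) *\<^sub>R y"

lemma coord_map_lattice:
  assumes "lattice_basis L x y"
  shows "inj (coord_map x y)" "L = range (coord_map x y)"
proof -
  have d: "det2 x y \<noteq> 0" and L: "L = lat_gen x y" using assms unfolding lattice_basis_def by auto
  show "inj (coord_map x y)"
  proof (rule injI)
    fix z w assume "coord_map x y z = coord_map x y w"
    then have "of_int (fst z - fst w) *\<^sub>R x + of_int (snd z - snd w) *\<^sub>R y = 0"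
      unfolding coord_map_def by (simp add: algebra_simps)
    from det2_coordinates_unique[OF d this] show "z = w" by (simp add: prod_eq_iff)
  qed
  have "v \<in> range (coord_map x y)" if vL: "v \<in> L" for v
  proof -
    obtain i j where "v = of_int i *\<^sub>R x + of_int j *\<^sub>R y" using vL unfolding L lat_gen_def by blast
    then have "v = coord_map x y (i, j)" unfolding coord_map_def by simp
    then show ?thesis by blast
  qed
  moreover have "range (coord_map x y) \<subseteq> L" unfolding L coord_map_def using lat_gen_mem by blast
  ultimately show "L = range (coord_map x y)" by blast
qed

lemma Z2I: "(of_int m, of_int n) \<in> Z2"
  unfolding Z2_def by blast

lemma Z2E:
  assumes "v \<in> Z2"
  obtains m n :: int where "v = (of_int m, of_int n)"
  using assms unfolding Z2_def by blast

lemma Z2_norm_sq_nat: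
  assumes "v \<in> Z2"
  shows "\<exists>k::nat. (norm v)^2 = of_nat k"
proof -
  obtain m n :: int where v: "v = (of_int m, of_int n)" using assms by (rule Z2E)
  have "(norm v)^2 = of_int (m^2 + n^2)" unfolding v norm_sq_prod by simp
  also have "\<dots> = of_nat (nat (m^2 + n^2))" by simp
  finally show ?thesis by blast
qed

text \<open>Since squared norms are natural numbers, a nonzero vector of least norm exists.\<close>
lemma Z2_lattice_min_attained:
  assumes "is_lattice L" "L \<subseteq> Z2"
  obtains z where "z \<in> L - {0}" "norm z = lat_min L" "\<And>y. y \<in> L - {0} \<Longrightarrow> norm z \<le> norm y"
proof -
  obtain a b where ab: "lattice_basis L a b" using assms(1) unfolding is_lattice_def by blast
  have "a \<in> L - {0}" using ab lat_gen_a unfolding lattice_basis_def det2_def by auto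
  define f where "f = (\<lambda>v::real \<times> real. nat \<lfloor>(norm v)^2\<rfloor>)"
  have f: "real (f v) = (norm v)^2" if vL: "v \<in> L" for v
  proof -
    obtain k where "(norm v)^2 = of_nat k" using Z2_norm_sq_nat vL assms(2) by blast
    then show ?thesis unfolding f_def by simp
  qed
  obtain z where z: "z \<in> L - {0}" "\<And>y. y \<in> L - {0} \<Longrightarrow> f z \<le> f y"
    using ex_has_least_nat[of "\<lambda>v. v \<in> L - {0}" a f] \<open>a \<in> L - {0}\<close> by blast
  have le: "norm z \<le> norm y" if "y \<in> L - {0}" for y
  proof -
    have "(norm z)^2 \<le> (norm y)^2" using z that f by (metis DiffD1 of_nat_le_iff)
    then show ?thesis by (simp add: power2_le_iff_abs_le)
  qed
  have "lat_min L = norm z" unfolding lat_min_def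
    by (rule cInf_eq_minimum) (use z le in auto)
  then show ?thesis using that z(1) le by simp
qed

lemma Z2_lattice_min_ge_1:
  assumes "is_lattice L" "L \<subseteq> Z2"
  shows "lat_min L \<ge> 1"
proof -
  obtain z where z: "z \<in> L - {0}" "norm z = lat_min L"
    using Z2_lattice_min_attained[OF assms] by metis
  obtain k :: nat where k: "(norm z)^2 = of_nat k" using Z2_norm_sq_nat z(1) assms(2) by blast
  have "(norm z)^2 > 0" using z(1) by simp
  then have "k \<noteq> 0" using k by auto
  then have "(norm z)^2 \<ge> 1^2" using k by simp
  then show ?thesis using z(2) power2_le_imp_le[of 1 "norm z"] norm_ge_zero[of z] by simp
qed

section \<open>Two independent minimal vectors form a basis\<close>

lemma short_rounding_remainder:
  fixes m t A B :: real
  assumes m: "m > 0" and t: "\<bar>t\<bar> < m^2" and A: "\<bar>A\<bar> \<le> 1/2" and B: "\<bar>B\<bar> \<le> 1/2"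
  shows "A^2 * m^2 + 2 * A * B * t + B^2 * m^2 < m^2"
proof (cases "A * B = 0")
  case True
  have "A^2 \<le> (1/2)^2" "B^2 \<le> (1/2)^2"
    using A B abs_le_square_iff[of A "1/2"] abs_le_square_iff[of B "1/2"] by simp_all
  moreover have m2: "m^2 > 0" using m by simp
  ultimately have "A^2 * m^2 \<le> (1/4) * m^2" "B^2 * m^2 \<le> (1/4) * m^2"
    by (simp_all add: power_divide mult_right_mono)
  then show ?thesis using True m2 by auto
next
  case False
  have "2 * A * B * t \<le> \<bar>2 * A * B * t\<bar>" by (rule abs_ge_self)
  also have "\<dots> = 2 * \<bar>A\<bar> * \<bar>B\<bar> * \<bar>t\<bar>" by (simp add: abs_mult)
  also have "\<dots> < 2 * \<bar>A\<bar> * \<bar>B\<bar> * m^2"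
    using False t by (simp add: abs_mult)
  finally have "A^2 * m^2 + 2 * A * B * t + B^2 * m^2 < (\<bar>A\<bar> + \<bar>B\<bar>)^2 * m^2"
    by (simp add: power2_eq_square algebra_simps)
  also have "\<dots> \<le> 1 * m^2"
    using A B by (intro mult_right_mono) (simp_all add: power_le_one)
  finally show ?thesis by simp
qed

text \<open>In a sublattice of \<open>\<int>\<^sup>2\<close>, two linearly independent minimal vectors x, y form a basis:
  rounding the coordinates of a lattice vector in the basis (x, y) leaves a lattice vector that is
  shorter than the minimum, hence zero.\<close>
lemma minimal_vectors_basis:
  assumes lat: "is_lattice L" and Z: "L \<subseteq> Z2" and x: "x \<in> min_vecs L" and y: "y \<in> min_vecs L"
    and d: "det2 x y \<noteq> 0"
  shows "lattice_basis L x y"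
proof -
  obtain a b where "lattice_basis L a b" using lat unfolding is_lattice_def by blast
  then have L: "L = lat_gen a b" unfolding lattice_basis_def by simp
  define m where "m = lat_min L"
  have m0: "m > 0" using Z2_lattice_min_ge_1[OF lat Z] unfolding m_def by simp
  have m_le: "m \<le> norm z" if "z \<in> L" "z \<noteq> 0" for z
    using Z2_lattice_min_attained[OF lat Z] that unfolding m_def by (metis DiffI singletonD)
  have xL: "x \<in> L" and yL: "y \<in> L" and nx: "norm x = m" and ny: "norm y = m"
    using x y unfolding min_vecs_def m_def by auto
  have gram: "x \<bullet> x = m^2" "y \<bullet> y = m^2"
    using nx ny by (simp_all flip: power2_norm_eq_inner)
  have "(det2 x y)^2 > 0" using d by simp
  then have "(x \<bullet> y)^2 < (m^2)^2"
    using det2_lagrange[of x y] nx ny by (simp add: power2_eq_square)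
  then have t: "\<bar>x \<bullet> y\<bar> < m^2" using abs_le_square_iff[of "m^2" "x \<bullet> y"] by (simp add: not_le[symmetric])
  have "L \<subseteq> lat_gen x y"
  proof
    fix z assume zL: "z \<in> L"
    define \<alpha> where "\<alpha> = det2 z y / det2 x y"
    define \<beta> where "\<beta> = det2 x z / det2 x y"
    define i where "i = round \<alpha>"
    define j where "j = round \<beta>"
    define r where "r = z - (of_int i *\<^sub>R x + of_int j *\<^sub>R y)"
    have "r \<in> L" unfolding r_def L using lat_gen_diff lat_gen_closed xL yL zL L by simp
    have r: "r = (\<alpha> - of_int i) *\<^sub>R x + (\<beta> - of_int j) *\<^sub>R y"
      unfolding r_def \<alpha>_def \<beta>_def by (subst det2_coordinates[OF d, of z]) (simp add: algebra_simps)
    have A: "\<bar>\<alpha> - of_int i\<bar> \<le> 1/2" unfolding i_def using of_int_round_abs_le[of \<alpha>] by linarith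
    have B: "\<bar>\<beta> - of_int j\<bar> \<le> 1/2" unfolding j_def using of_int_round_abs_le[of \<beta>] by linarith
    have "(norm r)^2 < m^2"
      unfolding r norm_sq_comb gram by (rule short_rounding_remainder[OF m0 t A B])
    have "r = 0"
    proof (rule ccontr)
      assume "r \<noteq> 0"
      then have "m^2 \<le> (norm r)^2" using m_le[OF \<open>r \<in> L\<close>] m0 by (simp add: power_mono)
      then show False using \<open>(norm r)^2 < m^2\<close> by simp
    qed
    then show "z \<in> lat_gen x y" unfolding r_def using lat_gen_mem by (metis eq_iff_diff_eq_0)
  qed
  moreover have "lat_gen x y \<subseteq> L" using lat_gen_subset xL yL L by simp
  ultimately show ?thesis unfolding lattice_basis_def using d by blast
qed

lemma WR_Z2_D:
  assumes "L \<in> WR_Z2"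
  shows "is_lattice L" "L \<subseteq> Z2" "well_rounded L" "lat_min L \<ge> 1"
  using assms Z2_lattice_min_ge_1[of L] unfolding WR_Z2_def by auto

lemma well_rounded_independent_minimal:
  assumes "well_rounded L" "lat_min L > 0"
  obtains x y where "x \<in> min_vecs L" "y \<in> min_vecs L" "det2 x y \<noteq> 0"
proof (rule ccontr)
  assume H: "\<not> thesis"
  have sp: "span (min_vecs L) = UNIV" using assms(1) unfolding well_rounded_def by simp
  have "min_vecs L \<noteq> {}"
  proof
    assume "min_vecs L = {}"
    then have "(1::real, 0::real) = 0" using sp by (metis UNIV_I span_empty singletonD)
    then show False by (simp add: zero_prod_def)
  qed
  then obtain x0 where x0: "x0 \<in> min_vecs L" by blast
  then have "x0 \<noteq> 0" using assms(2) unfolding min_vecs_def by auto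
  define S where "S = {v. det2 x0 v = 0}"
  have "subspace S" unfolding subspace_def S_def det2_def by (auto simp: algebra_simps)
  moreover have "min_vecs L \<subseteq> S" using H that x0 unfolding S_def by blast
  ultimately have "span (min_vecs L) \<subseteq> S" by (simp add: span_minimal)
  moreover have "(- snd x0, fst x0) \<notin> S"
  proof
    assume "(- snd x0, fst x0) \<in> S"
    then have "(fst x0)^2 + (snd x0)^2 = 0" unfolding S_def det2_def by (simp add: power2_eq_square)
    then show False using \<open>x0 \<noteq> 0\<close> by (simp add: prod_eq_iff sum_power2_eq_zero_iff)
  qed
  ultimately show False using sp by auto
qed

text \<open>Two independent minimal vectors of a well-rounded integral lattice: they form a basis,
  and their inner product is determined by |L| and det L through Lagrange's identity.\<close>
lemma minimal_pair_facts:
  assumes "L \<in> WR_Z2" "x \<in> min_vecs L" "y \<in> min_vecs L" "det2 x y \<noteq> 0"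
  shows "lattice_basis L x y" "lat_det L = \<bar>det2 x y\<bar>" "norm x = lat_min L" "norm y = lat_min L"
    "\<bar>x \<bullet> y\<bar> = sqrt ((lat_min L)^4 - (lat_det L)^2)"
proof -
  show lb: "lattice_basis L x y"
    using minimal_vectors_basis WR_Z2_D[OF assms(1)] assms(2-4) by blast
  show D: "lat_det L = \<bar>det2 x y\<bar>" using lat_det_eq[OF lb] .
  show nx: "norm x = lat_min L" "norm y = lat_min L" using assms(2,3) unfolding min_vecs_def by auto
  have "(x \<bullet> y)^2 = (lat_min L)^4 - (lat_det L)^2"
    using det2_lagrange[of x y] nx D by (simp add: power2_eq_square power4_eq_xxxx)
  then show "\<bar>x \<bullet> y\<bar> = sqrt ((lat_min L)^4 - (lat_det L)^2)"
    by (metis real_sqrt_abs)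
qed

lemma wr_theta_sin:
  assumes L: "L \<in> WR_Z2"
  shows "sin (wr_theta L) = lat_det L / (lat_min L)^2"
proof -
  define m where "m = lat_min L"
  define D where "D = lat_det L"
  have m2: "m^2 > 0" using WR_Z2_D[OF L] unfolding m_def by simp
  obtain x0 y0 where xy0: "x0 \<in> min_vecs L" "y0 \<in> min_vecs L" "det2 x0 y0 \<noteq> 0"
    using well_rounded_independent_minimal WR_Z2_D[OF L] by (metis less_le_trans zero_less_one)
  note P0 = minimal_pair_facts[OF L xy0]
  define c where "c = sqrt (m^4 - D^2) / m^2"
  have cos_pair: "\<bar>x \<bullet> y\<bar> / (norm x * norm y) = c"
    if "x \<in> min_vecs L" "y \<in> min_vecs L" "det2 x y \<noteq> 0" for x y
    using minimal_pair_facts[OF L that] unfolding c_def m_def D_def by (simp add: power2_eq_square)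
  have th: "wr_theta L = arccos c"
    unfolding wr_theta_def
  proof (rule the_equality)
    show "\<exists>x\<in>min_vecs L. \<exists>y\<in>min_vecs L. det2 x y \<noteq> 0 \<and>
        arccos c = arccos (\<bar>x \<bullet> y\<bar> / (norm x * norm y))"
      using xy0 cos_pair[OF xy0] by metis
  qed (use cos_pair in metis)
  have "(x0 \<bullet> y0)^2 = m^4 - D^2"
    using det2_lagrange[of x0 y0] P0 unfolding m_def D_def by (simp add: power2_eq_square power4_eq_xxxx)
  then have nonneg: "m^4 - D^2 \<ge> 0" by (metis zero_le_power2)
  have "(m^2)^2 = m^4" by simp
  then have c2: "c^2 = 1 - D^2 / (m^2)^2" unfolding c_def using nonneg m2 by (simp add: power_divide field_simps)
  have c0: "c \<ge> 0" unfolding c_def using nonneg by simp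
  have "c^2 \<le> 1" using c2 by (simp add: divide_nonneg_nonneg)
  then have c1: "c \<le> 1" using c0 by (simp add: power_le_one_iff abs_square_le_1)
  have "sin (arccos c) = sqrt (1 - c^2)" using c0 c1 by (intro sin_arccos) auto
  also have "\<dots> = sqrt ((D / m^2)^2)" using c2 by (simp add: power_divide)
  also have "\<dots> = D / m^2" using P0(2) m2 unfolding D_def by simp
  finally show ?thesis using th unfolding m_def D_def by simp
qed

section \<open>Arithmetic of the set S\<close>

abbreviation rho :: "nat \<Rightarrow> nat \<Rightarrow> real" where
  "rho p q \<equiv> sqrt ((real q)^2 - (real p)^2)"

lemma in_S_basic:
  assumes "in_S p q"
  shows "0 < p" "0 < q" "coprime p q" "p \<le> q" "3 * (real q)^2 < 4 * (real p)^2"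
proof -
  show "0 < p" "0 < q" "coprime p q" using assms unfolding in_S_def by auto
  have "p = 1 \<and> q = 1 \<or> (0 < q \<and> sqrt 3 / 2 < real p / real q \<and> real p / real q < 1)"
    using assms unfolding in_S_def by auto
  then have "p \<le> q \<and> 3 * (real q)^2 < 4 * (real p)^2"
  proof (elim disjE)
    assume h: "0 < q \<and> sqrt 3 / 2 < real p / real q \<and> real p / real q < 1"
    then have "p \<le> q" by (auto simp: divide_less_eq_1)
    have "sqrt 3 < 2 * real p / real q" using h by (simp add: mult.commute)
    then have "sqrt 3 * real q < 2 * real p" using h by (simp add: less_divide_eq)
    then have "(sqrt 3 * real q)^2 < (2 * real p)^2" by (intro power_strict_mono) auto
    then show ?thesis using \<open>p \<le> q\<close> by (simp add: power_mult_distrib)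
  qed auto
  then show "p \<le> q" "3 * (real q)^2 < 4 * (real p)^2" by auto
qed

text \<open>The angle condition \<open>\<theta> \<ge> \<pi>/3\<close> in the form needed later: \<open>0 \<le> 2\<rho> \<le> q\<close>.\<close>
lemma rho_bounds:
  assumes "in_S p q"
  shows "0 \<le> rho p q" "(rho p q)^2 = (real q)^2 - (real p)^2" "2 * rho p q \<le> real q"
proof -
  have "(real p)^2 \<le> (real q)^2" using in_S_basic(4)[OF assms] by (intro power_mono) auto
  then show "0 \<le> rho p q" and sq: "(rho p q)^2 = (real q)^2 - (real p)^2" by simp_all
  have "(2 * rho p q)^2 \<le> (real q)^2"
    using sq in_S_basic(5)[OF assms] by (simp add: power_mult_distrib)
  then show "2 * rho p q \<le> real q"
    using abs_le_square_iff[of "2 * rho p q" "real q"] by simp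
qed

lemma sq_mod4_odd: "odd (x::nat) \<Longrightarrow> x^2 mod 4 = 1"
proof -
  assume "odd x" then obtain k where "x = 2 * k + 1" by (metis oddE)
  then have "x^2 = 4 * (k^2 + k) + 1" by (simp add: power2_eq_square algebra_simps)
  then show ?thesis by simp
qed

lemma sq_mod4_even: "even (x::nat) \<Longrightarrow> x^2 mod 4 = 0"
proof -
  assume "even x" then obtain k where "x = 2 * k" by blast
  then have "x^2 = 4 * k^2" by (simp add: power2_eq_square algebra_simps)
  then show ?thesis by simp
qed

lemma coprime_product_square:
  fixes u v t :: nat
  assumes "coprime u v" "u > 0" "v > 0" "u * v = t^2"
  obtains m n where "u = m^2" "v = n^2" "t = m * n"
proof -
  have "is_nth_power 2 (u * v)" using assms(4) by auto
  then have "is_nth_power 2 u" "is_nth_power 2 v"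
    using is_nth_power_mult_coprime_natD[OF assms(1) _ assms(2,3)] by auto
  then obtain m n where m: "u = m^2" and n: "v = n^2" by (meson is_nth_powerE)
  have "t^2 = (m * n)^2" using assms(4) m n by (simp add: power_mult_distrib)
  then have "t = m * n" by (simp add: power2_eq_iff_nonneg)
  with m n that show ?thesis by blast
qed

text \<open>Euclid's parametrisation of a primitive Pythagorean triple with odd leg p:
  \<open>(q + p)/2\<close> and \<open>(q - p)/2\<close> are coprime with square product, hence both squares.\<close>
lemma pythagorean_odd_leg:
  fixes p r q :: nat
  assumes cop: "coprime p q" and odd: "odd p" and eq: "p^2 + r^2 = q^2" and pq: "p < q"
  shows "\<exists>m n::nat. q = m^2 + n^2 \<and> int p = int m^2 - int n^2 \<and> r = 2 * m * n"
proof -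
  have "even r"
  proof (rule ccontr)
    assume "odd r"
    then have "(p^2 + r^2) mod 4 = 2" using sq_mod4_odd[OF odd] sq_mod4_odd[of r]
      by (simp add: mod_add_eq[symmetric])
    moreover have "q^2 mod 4 = 0 \<or> q^2 mod 4 = 1" using sq_mod4_odd sq_mod4_even by blast
    ultimately show False using eq by simp
  qed
  then have "odd (q^2)" using eq odd by (metis even_add even_power)
  then have oq: "odd q" by simp
  from \<open>even r\<close> obtain t where t: "r = 2 * t" by (rule evenE)
  define u where "u = (q + p) div 2"
  define v where "v = (q - p) div 2"
  have u2: "2 * u = q + p" using oq odd unfolding u_def by presburger
  have v2: "2 * v = q - p" using oq odd pq unfolding v_def by presburger
  have "int q^2 - int p^2 = int r^2" using eq by (metis add_diff_cancel_left' of_nat_add of_nat_power)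
  then have "(int q + int p) * (int q - int p) = 4 * int t^2" using t
    by (simp add: power2_eq_square algebra_simps)
  moreover have "int q + int p = 2 * int u" "int q - int p = 2 * int v" using u2 v2 pq by linarith+
  ultimately have "int (u * v) = int (t^2)" by simp
  then have uv: "u * v = t^2" by linarith
  have u0: "u > 0" and v0: "v > 0" using u2 v2 pq by simp_all
  have upv: "u + v = q" and umv: "u - v = p" using u2 v2 pq by simp_all
  have cuv: "coprime u v"
  proof (rule coprimeI)
    fix c assume cu: "c dvd u" and cv: "c dvd v"
    have "c dvd q" using cu cv upv by (metis dvd_add)
    moreover have "c dvd p" using cu cv umv by (metis dvd_diff_nat)
    ultimately show "is_unit c" using cop by (metis coprime_common_divisor)
  qed
  obtain m n where m: "u = m^2" and n: "v = n^2" and "t = m * n"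
    using coprime_product_square[OF cuv u0 v0 uv] .
  moreover have "q = m^2 + n^2" using upv m n by simp
  moreover have "int p = int m^2 - int n^2"
  proof -
    have "v \<le> u" using u2 v2 by simp
    then have "int p = int u - int v" using umv by (simp flip: of_nat_diff)
    then show ?thesis using m n by simp
  qed
  ultimately show ?thesis using t by (intro exI[of _ m] exI[of _ n]) auto
qed

lemma pythagorean_param:
  fixes p r q :: nat
  assumes cop: "coprime p q" and eq: "p^2 + r^2 = q^2" and p0: "0 < p" and pq: "p < q"
  shows "\<exists>m n::int. int q = m^2 + n^2 \<and>
     ((int p = m^2 - n^2 \<and> int r = 2 * m * n) \<or> (int r = m^2 - n^2 \<and> int p = 2 * m * n))"
proof (cases "odd p")
  case True
  from pythagorean_odd_leg[OF cop True eq pq] obtain m n where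
    "q = m^2 + n^2 \<and> int p = int m^2 - int n^2 \<and> r = 2 * m * n" by blast
  then show ?thesis by (intro exI[of _ "int m"] exI[of _ "int n"]) auto
next
  case False
  have "odd r"
  proof
    assume "even r"
    then have "even (q^2)" using False eq by (metis even_add even_power zero_less_numeral)
    then have "even q" by simp
    then have "2 dvd gcd p q" using False by simp
    then show False using cop by simp
  qed
  have cop2: "coprime r q"
  proof (rule coprimeI)
    fix c assume cr: "c dvd r" and cq: "c dvd q"
    have "c dvd q^2 - r^2" using cr cq by (simp add: dvd_diff_nat power2_eq_square)
    moreover have "q^2 - r^2 = p^2" using eq by simp
    ultimately have "c dvd p^2" by simp
    have "coprime c p" using cq cop by (metis coprime_commute coprime_imp_coprime dvd_trans dvd_refl)
    then have "coprime c (p^2)" by simp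
    with \<open>c dvd p^2\<close> show "is_unit c" by (metis coprime_absorb_left coprime_commute)
  qed
  have "0 < p^2" using p0 by simp
  then have "r^2 < q^2" using eq by linarith
  then have "r < q" using power_less_imp_less_base by blast
  have "r^2 + p^2 = q^2" using eq by simp
  from pythagorean_odd_leg[OF cop2 \<open>odd r\<close> this \<open>r < q\<close>] obtain m n where
    "q = m^2 + n^2 \<and> int r = int m^2 - int n^2 \<and> p = 2 * m * n" by blast
  then show ?thesis by (intro exI[of _ "int m"] exI[of _ "int n"]) auto
qed

section \<open>(p,q)-bases\<close>

definition pq_basis :: "nat \<Rightarrow> nat \<Rightarrow> real \<Rightarrow> real \<times> real \<Rightarrow> real \<times> real \<Rightarrow> bool" where
  "pq_basis p q k x y \<longleftrightarrow> x \<bullet> x = k * real q \<and> y \<bullet> y = k * real q \<and> x \<bullet> y = k * rho p q"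

lemma norm_form_pq_basis:
  assumes "pq_basis p q k x y"
  shows "norm_form x y X Y = k * Qpq p q X Y"
  using assms unfolding pq_basis_def norm_form_def Qpq_def norm_sq_comb by (simp add: algebra_simps)

text \<open>An integral (p,q)-basis of scale 1 with determinant p, built from the parametrisation
  of the Pythagorean triple \<open>(p, \<rho>, q)\<close>: the vectors (m, n), (n, m) or (m, -n), (m, n).\<close>
lemma integral_pq_basis_exists:
  assumes S: "in_S p q"
  obtains a b where "a \<in> Z2" "b \<in> Z2" "pq_basis p q 1 a b" "\<bar>det2 a b\<bar> = real p"
proof (cases "p = 1 \<and> q = 1")
  case True
  then show ?thesis
    using that[of "(1, 0)" "(0, 1)"] Z2I[of 1 0] Z2I[of 0 1] by (simp add: pq_basis_def det2_def)
next
  case False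
  then have h: "0 < p" "coprime p q" "p < q" and "\<exists>r::nat. q^2 - p^2 = r^2"
    using S unfolding in_S_def by (auto simp: divide_less_eq_1)
  then obtain r :: nat where r: "q^2 - p^2 = r^2" by blast
  have "p^2 < q^2" using h(3) by (simp add: power_strict_mono)
  then have eq: "p^2 + r^2 = q^2" using r by simp
  then have "real (p^2 + r^2) = real (q^2)" by simp
  then have "(real q)^2 - (real p)^2 = (real r)^2" by simp
  then have rho: "rho p q = real r" by simp
  obtain m n :: int where q: "int q = m^2 + n^2"
    and cases: "(int p = m^2 - n^2 \<and> int r = 2*m*n) \<or> (int r = m^2 - n^2 \<and> int p = 2*m*n)"
    using pythagorean_param[OF h(2) eq h(1) h(3)] by blast
  have qr: "real q = (of_int m)^2 + (of_int n)^2" using arg_cong[OF q, of real_of_int] by simp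
  from cases show ?thesis
  proof
    assume c: "int p = m^2 - n^2 \<and> int r = 2*m*n"
    have "real p = (of_int m)^2 - (of_int n)^2" "real r = 2 * of_int m * of_int n"
      using arg_cong[OF conjunct1[OF c], of real_of_int] arg_cong[OF conjunct2[OF c], of real_of_int]
      by simp_all
    then show ?thesis using that[of "(of_int m, of_int n)" "(of_int n, of_int m)"] qr rho Z2I
      by (simp add: pq_basis_def det2_def power2_eq_square)
  next
    assume c: "int r = m^2 - n^2 \<and> int p = 2*m*n"
    have "real r = (of_int m)^2 - (of_int n)^2" "real p = 2 * of_int m * of_int n"
      using arg_cong[OF conjunct1[OF c], of real_of_int] arg_cong[OF conjunct2[OF c], of real_of_int]
      by simp_all
    then show ?thesis using that[of "(of_int m, - of_int n)" "(of_int m, of_int n)"] qr rho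
        Z2I[of m "-n"] Z2I[of m n]
      by (simp add: pq_basis_def det2_def power2_eq_square)
  qed
qed

lemma coprime_proportion:
  fixes p q D M :: int
  assumes cop: "coprime p q" and p: "p \<noteq> 0" and eq: "q * D = p * M"
  obtains k where "D = p * k" "M = q * k"
proof -
  have "p dvd q * D" using eq by simp
  then have "p dvd D" using cop by (simp add: coprime_dvd_mult_right_iff)
  then obtain k where k: "D = p * k" by blast
  then have "p * (q * k) = p * M" using eq by (simp add: algebra_simps)
  then have "M = q * k" using p by simp
  with k show ?thesis using that by blast
qed

lemma Z2_integral_invariants:
  assumes "x \<in> Z2" "y \<in> Z2"
  shows "\<exists>M::int. (norm x)^2 = of_int M" "\<exists>D::int. \<bar>det2 x y\<bar> = of_int D"
proof -
  obtain a1 a2 :: int where x: "x = (of_int a1, of_int a2)" using assms(1) by (rule Z2E)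
  obtain b1 b2 :: int where y: "y = (of_int b1, of_int b2)" using assms(2) by (rule Z2E)
  show "\<exists>M::int. (norm x)^2 = of_int M" unfolding x norm_sq_prod
    by (intro exI[of _ "a1^2 + a2^2"]) simp
  show "\<exists>D::int. \<bar>det2 x y\<bar> = of_int D" unfolding x y det2_def
    by (intro exI[of _ "\<bar>a1 * b2 - a2 * b1\<bar>"]) simp
qed

lemma wr_acute_minimal_basis:
  assumes L: "L \<in> WR_Z2"
  obtains x y where "minimal_basis L x y" "x \<bullet> y = sqrt ((lat_min L)^4 - (lat_det L)^2)"
proof -
  obtain x y0 where xy0: "x \<in> min_vecs L" "y0 \<in> min_vecs L" "det2 x y0 \<noteq> 0"
    using well_rounded_independent_minimal WR_Z2_D[OF L] by (metis less_le_trans zero_less_one)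
  define y where "y = (if x \<bullet> y0 \<ge> 0 then y0 else - y0)"
  have "L = lat_gen x y0" using minimal_pair_facts(1)[OF L xy0] unfolding lattice_basis_def by simp
  then have "- y0 \<in> min_vecs L" using xy0(2) lat_gen_minus[of y0 x y0] unfolding min_vecs_def by auto
  then have y: "y \<in> min_vecs L" using xy0(2) unfolding y_def by auto
  have d: "det2 x y \<noteq> 0" using xy0(3) unfolding y_def det2_def by auto
  have "x \<bullet> y = \<bar>x \<bullet> y0\<bar>" unfolding y_def by auto
  then have "x \<bullet> y = \<bar>x \<bullet> y\<bar>" by simp
  then show ?thesis
    using that minimal_pair_facts[OF L xy0(1) y d] xy0(1) y unfolding minimal_basis_def by metis
qed

text \<open>Every lattice of C(p,q) has a minimal basis that is a (p,q)-basis of some integer scale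
  \<open>k \<ge> 1\<close>, and \<open>det L = k p\<close>, \<open>|L|^2 = k q\<close>: the relation \<open>q det L = p |L|^2\<close> from
  \<open>sin \<theta> = p/q\<close> between integers forces this since p, q are coprime.\<close>
lemma C_set_pq_basis:
  assumes S: "in_S p q" and L: "L \<in> C_set p q"
  obtains k :: nat and x y where "k \<ge> 1" "lat_det L = real k * real p"
    "lat_min L = sqrt (real k * real q)" "minimal_basis L x y" "pq_basis p q (real k) x y"
proof -
  have LW: "L \<in> WR_Z2" and sinL: "sin (wr_theta L) = real p / real q"
    using L unfolding C_set_def by auto
  define m where "m = lat_min L"
  define D where "D = lat_det L"
  have m1: "m \<ge> 1" using WR_Z2_D[OF LW] unfolding m_def by simp
  obtain x y where mb: "minimal_basis L x y" and xy: "x \<bullet> y = sqrt (m^4 - D^2)"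
    using wr_acute_minimal_basis[OF LW] unfolding m_def D_def by blast
  have lb: "lattice_basis L x y" and nx: "norm x = m" and ny: "norm y = m" and Dxy: "D = \<bar>det2 x y\<bar>"
    using mb lat_det_eq unfolding minimal_basis_def min_vecs_def m_def D_def by auto
  have "x \<in> Z2" "y \<in> Z2"
    using WR_Z2_D(2)[OF LW] lb lat_gen_a lat_gen_b unfolding lattice_basis_def by blast+
  then obtain M Di :: int where M: "m^2 = of_int M" and Di: "D = of_int Di"
    using Z2_integral_invariants nx Dxy by metis
  have "D / m^2 = real p / real q" using wr_theta_sin[OF LW] sinL unfolding m_def D_def by simp
  then have "real q * D = real p * m^2" using in_S_basic(2)[OF S] m1 by (simp add: field_simps)
  then have "int q * Di = int p * M" using M Di by (metis of_int_eq_iff of_int_mult of_int_of_nat_eq)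
  then obtain k0 where k0: "Di = int p * k0" "M = int q * k0"
    using coprime_proportion[of "int p" "int q"] in_S_basic(1,3)[OF S] by auto
  have "D > 0" using lb Dxy unfolding lattice_basis_def by simp
  then have "k0 > 0" using Di k0(1) in_S_basic(1)[OF S] by (simp add: zero_less_mult_iff)
  define k where "k = nat k0"
  have kk: "real k = of_int k0" "k \<ge> 1" unfolding k_def using \<open>k0 > 0\<close> by auto
  have Dk: "D = real k * real p" and mk: "m^2 = real k * real q" unfolding Di M k0 kk by simp_all
  have "m^4 - D^2 = (real k * rho p q)^2"
    using mk Dk rho_bounds(2)[OF S] by (simp add: power4_eq_xxxx power2_eq_square algebra_simps)
  then have "x \<bullet> y = real k * rho p q" using xy rho_bounds(1)[OF S] by simp
  moreover have "x \<bullet> x = real k * real q" "y \<bullet> y = real k * real q"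
    using nx ny mk by (simp_all flip: power2_norm_eq_inner)
  moreover have "m = sqrt (m^2)" using m1 by simp
  then have "m = sqrt (real k * real q)" using mk by simp
  ultimately show ?thesis
    using that kk(2) Dk mb unfolding pq_basis_def m_def D_def by blast
qed

text \<open>For \<open>0 \<le> 2r \<le> q\<close> the form \<open>q(i^2 + j^2) + 2rij\<close> takes values at least q at nonzero
  integer points: for \<open>ij \<ge> 0\<close> this is clear, and otherwise it is at least
  \<open>q(i^2 + ij + j^2) \<ge> q\<close>.\<close>
lemma binary_form_ge:
  fixes i j :: int and q r :: real
  assumes "(i, j) \<noteq> (0, 0)" "0 \<le> r" "2 * r \<le> q"
  shows "q * (of_int i^2 + of_int j^2) + 2 * r * of_int i * of_int j \<ge> q"
proof -
  have q0: "q \<ge> 0" using assms by simp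
  have "i^2 > 0 \<or> j^2 > 0" using assms(1) by auto
  then have "i^2 + j^2 \<ge> 1" by (smt (verit) zero_le_power2)
  then have ij1: "of_int i^2 + of_int j^2 \<ge> (1::real)"
    using of_int_le_iff[of 1 "i^2 + j^2", where 'a=real] by simp
  show ?thesis
  proof (cases "i * j \<ge> 0")
    case True
    have "q * 1 \<le> q * (of_int i^2 + of_int j^2)"
      using ij1 q0 by (intro mult_left_mono) simp_all
    moreover have "0 \<le> (2 * r) * (of_int i * of_int j)"
      using True assms(2) by (simp flip: of_int_mult)
    ultimately show ?thesis by (simp add: algebra_simps)
  next
    case False
    have "2 * (i^2 + i*j + j^2) = i^2 + j^2 + (i + j)^2" by (simp add: power2_eq_square algebra_simps)
    then have "i^2 + i*j + j^2 \<ge> 1" using \<open>i^2 + j^2 \<ge> 1\<close> by (smt (verit) zero_le_power2)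
    then have Xr: "of_int i^2 + of_int i * of_int j + of_int j^2 \<ge> (1::real)"
      using of_int_le_iff[of 1 "i^2 + i*j + j^2", where 'a=real] by simp
    have "of_int i * of_int j \<le> (0::real)" using False by (simp flip: of_int_mult)
    then have "(2 * r) * (of_int i * of_int j) \<ge> q * (of_int i * of_int j)"
      by (rule mult_right_mono_neg[OF assms(3)])
    moreover have "q * (of_int i^2 + of_int i * of_int j + of_int j^2) \<ge> q * 1"
      using Xr q0 by (intro mult_left_mono) simp_all
    ultimately show ?thesis by (simp add: algebra_simps)
  qed
qed

lemma lat_gen_Z2:
  assumes "a \<in> Z2" "b \<in> Z2"
  shows "lat_gen a b \<subseteq> Z2"
proof
  fix z assume "z \<in> lat_gen a b"
  then obtain i j where z: "z = of_int i *\<^sub>R a + of_int j *\<^sub>R b" unfolding lat_gen_def by blast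
  obtain a1 a2 where a: "a = (of_int a1, of_int a2)" using assms(1) by (rule Z2E)
  obtain b1 b2 where b: "b = (of_int b1, of_int b2)" using assms(2) by (rule Z2E)
  have "z = (of_int (i*a1 + j*b1), of_int (i*a2 + j*b2))" unfolding z a b by simp
  then show "z \<in> Z2" using Z2I[of "i*a1 + j*b1" "i*a2 + j*b2"] by simp
qed

text \<open>An integral (p,q)-basis of scale 1 consists of shortest vectors of the lattice it
  spans, since \<open>Q_{p,q}\<close> is at least q at nonzero integer points.\<close>
lemma pq_lattice_min:
  assumes S: "in_S p q" and Z: "a \<in> Z2" "b \<in> Z2" and B: "pq_basis p q 1 a b"
    and d: "det2 a b \<noteq> 0"
  shows "lat_min (lat_gen a b) = sqrt (real q)"
proof -
  define L where "L = lat_gen a b"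
  have lat: "is_lattice L" unfolding is_lattice_def lattice_basis_def L_def using d by blast
  have sub: "L \<subseteq> Z2" unfolding L_def using lat_gen_Z2[OF Z] .
  obtain z where z: "z \<in> L - {0}" "norm z = lat_min L" "\<And>y. y \<in> L - {0} \<Longrightarrow> norm z \<le> norm y"
    using Z2_lattice_min_attained[OF lat sub] by blast
  obtain i j where zij: "z = of_int i *\<^sub>R a + of_int j *\<^sub>R b" using z(1) unfolding L_def lat_gen_def by blast
  have "(i, j) \<noteq> (0, 0)" using z(1) zij by auto
  then have "real q \<le> real q * (of_int i^2 + of_int j^2) + 2 * rho p q * of_int i * of_int j"
    by (rule binary_form_ge[OF _ rho_bounds(1,3)[OF S]])
  also have "\<dots> = (norm z)^2"
    using norm_form_pq_basis[OF B, of "of_int i" "of_int j"]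
    unfolding zij norm_form_def Qpq_def by (simp add: algebra_simps)
  finally have "real q \<le> (norm z)^2" .
  moreover have "a \<in> L - {0}" using d lat_gen_a unfolding L_def det2_def by auto
  then have "(norm z)^2 \<le> (norm a)^2" using z(3) by (simp add: power_mono)
  then have "(norm z)^2 \<le> real q" using B by (simp add: pq_basis_def power2_norm_eq_inner)
  ultimately have "norm z = sqrt (real q)" by (metis norm_ge_zero real_sqrt_unique order_antisym)
  then show ?thesis using z(2) unfolding L_def by simp
qed

lemma pq_lattice_properties:
  assumes S: "in_S p q" and Z: "a \<in> Z2" "b \<in> Z2" and B: "pq_basis p q 1 a b"
    and dab: "\<bar>det2 a b\<bar> = real p"
  shows "lat_gen a b \<in> C_set p q" "lat_min (lat_gen a b) = sqrt (real q)"
    "lat_det (lat_gen a b) = real p" "minimal_basis (lat_gen a b) a b"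
proof -
  define L where "L = lat_gen a b"
  have d: "det2 a b \<noteq> 0" using dab in_S_basic(1)[OF S] by auto
  have lb: "lattice_basis L a b" unfolding lattice_basis_def L_def using d by simp
  have lm: "lat_min L = sqrt (real q)" unfolding L_def using pq_lattice_min[OF S Z B d] .
  have "norm a = sqrt (real q)" "norm b = sqrt (real q)"
    using B by (simp_all add: norm_eq_sqrt_inner pq_basis_def)
  then have amin: "a \<in> min_vecs L" "b \<in> min_vecs L"
    unfolding min_vecs_def using lm lat_gen_a lat_gen_b L_def by auto
  have "v \<in> span (min_vecs L)" for v
    using amin by (subst det2_coordinates[OF d, of v]) (intro span_add span_scale span_base)
  then have "span (min_vecs L) = UNIV" by auto
  then have LW: "L \<in> WR_Z2"
    using lb lat_gen_Z2[OF Z] unfolding WR_Z2_def well_rounded_def is_lattice_def L_def by blast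
  have ld: "lat_det L = real p" using lat_det_eq[OF lb] dab by simp
  have "sin (wr_theta L) = real p / real q" using wr_theta_sin[OF LW] ld lm by simp
  then show "lat_gen a b \<in> C_set p q" using LW unfolding C_set_def L_def by simp
  show "lat_min (lat_gen a b) = sqrt (real q)" "lat_det (lat_gen a b) = real p"
    using lm ld unfolding L_def by simp_all
  show "minimal_basis (lat_gen a b) a b" using lb amin unfolding minimal_basis_def L_def by simp
qed

definition basis_map ::
    "real \<times> real \<Rightarrow> real \<times> real \<Rightarrow> real \<times> real \<Rightarrow> real \<times> real \<Rightarrow> real \<times> real \<Rightarrow> real \<times> real" where
  "basis_map a b a' b' v = (det2 v b / det2 a b) *\<^sub>R a' + (det2 a v / det2 a b) *\<^sub>R b'"

lemma basis_map_linear: "linear (basis_map a b a' b')"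
proof (rule linearI)
  show "basis_map a b a' b' (u + v) = basis_map a b a' b' u + basis_map a b a' b' v" for u v
    unfolding basis_map_def det2_add_left det2_add_right
    by (simp add: add_divide_distrib scaleR_add_left)
  show "basis_map a b a' b' (r *\<^sub>R u) = r *\<^sub>R basis_map a b a' b' u" for r u
    unfolding basis_map_def det2_scale_left det2_scale_right by (simp add: scaleR_add_right)
qed

lemma basis_map_comb:
  assumes "det2 a b \<noteq> 0"
  shows "basis_map a b a' b' (\<alpha> *\<^sub>R a + \<beta> *\<^sub>R b) = \<alpha> *\<^sub>R a' + \<beta> *\<^sub>R b'"
  using assms unfolding basis_map_def
  by (simp add: det2_add_left det2_add_right det2_scale_left det2_scale_right det2_self)

lemma basis_map_lattice:
  assumes "det2 a b \<noteq> 0"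
  shows "basis_map a b a' b' ` lat_gen a b = lat_gen a' b'"
  using lat_gen_linear_image[OF basis_map_linear[of a b a' b'], of a b]
    basis_map_comb[OF assms, of a' b' 1 0] basis_map_comb[OF assms, of a' b' 0 1] by simp

lemma basis_map_orthogonal:
  assumes d: "det2 a b \<noteq> 0" and c: "c > 0"
    and gram: "a' \<bullet> a' = c^2 * (a \<bullet> a)" "b' \<bullet> b' = c^2 * (b \<bullet> b)" "a' \<bullet> b' = c^2 * (a \<bullet> b)"
  shows "orthogonal_transformation (\<lambda>v. (1/c) *\<^sub>R basis_map a b a' b' v)"
  unfolding orthogonal_transformation_def
proof (intro conjI allI)
  show "linear (\<lambda>v. (1/c) *\<^sub>R basis_map a b a' b' v)"
    by (rule linear_compose_scale_right[OF basis_map_linear])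
  fix v w
  obtain \<alpha> \<beta> where v: "v = \<alpha> *\<^sub>R a + \<beta> *\<^sub>R b" using det2_coordinates[OF d] by blast
  obtain \<gamma> \<delta> where w: "w = \<gamma> *\<^sub>R a + \<delta> *\<^sub>R b" using det2_coordinates[OF d] by blast
  have "((1/c) *\<^sub>R a') \<bullet> ((1/c) *\<^sub>R a') = a \<bullet> a" "((1/c) *\<^sub>R b') \<bullet> ((1/c) *\<^sub>R b') = b \<bullet> b"
    "((1/c) *\<^sub>R a') \<bullet> ((1/c) *\<^sub>R b') = a \<bullet> b"
    using gram c by (simp_all add: power2_eq_square)
  then show "((1/c) *\<^sub>R basis_map a b a' b' v) \<bullet> ((1/c) *\<^sub>R basis_map a b a' b' w) = v \<bullet> w"
    unfolding v w basis_map_comb[OF d] scaleR_add_right scaleR_scaleR mult.commute[of "1/c"]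
    by (simp only: flip: scaleR_scaleR) (simp only: inner_comb)
qed

lemma basis_map_rational:
  assumes "a \<in> Z2" "b \<in> Z2" "x \<in> Z2" "y \<in> Z2" "v \<in> Z2"
  shows "fst (basis_map a b x y v) \<in> \<rat>" "snd (basis_map a b x y v) \<in> \<rat>"
proof -
  obtain a1 a2 where a: "a = (of_int a1, of_int a2)" using assms(1) by (rule Z2E)
  obtain b1 b2 where b: "b = (of_int b1, of_int b2)" using assms(2) by (rule Z2E)
  obtain x1 x2 where x: "x = (of_int x1, of_int x2)" using assms(3) by (rule Z2E)
  obtain y1 y2 where y: "y = (of_int y1, of_int y2)" using assms(4) by (rule Z2E)
  obtain v1 v2 where v: "v = (of_int v1, of_int v2)" using assms(5) by (rule Z2E)
  show "fst (basis_map a b x y v) \<in> \<rat>" "snd (basis_map a b x y v) \<in> \<rat>"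
    unfolding basis_map_def a b x y v det2_def
    by (simp_all del: of_int_mult of_int_diff add: of_int_mult[symmetric] of_int_diff[symmetric])
qed

section \<open>Sums over \<open>(A - {0}) / {\<plusminus>1}\<close> and the Epstein zeta function\<close>

lemma some_in_pm_class:
  assumes "\<And>x. f (- x) = f x"
  shows "f (SOME w. w \<in> {x, - x}) = f x"
proof -
  have "(SOME w. w \<in> {x, - x}) \<in> {x, - x}" by (rule someI_ex) blast
  then show ?thesis using assms by auto
qed

lemma sum_pm_cong:
  assumes "\<And>x. x \<noteq> 0 \<Longrightarrow> f x = g x"
  shows "sum_pm f A = sum_pm g A"
  unfolding sum_pm_def
proof (rule infsum_cong)
  fix C assume "C \<in> {{x, - x} |x. x \<in> A - {0}}"
  then obtain x where "x \<noteq> 0" "C = {x, - x}" by blast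
  moreover have "(SOME w. w \<in> C) \<in> C" by (rule someI_ex) (use \<open>C = {x, - x}\<close> in blast)
  ultimately show "f (SOME w. w \<in> C) = g (SOME w. w \<in> C)" using assms by auto
qed

lemma sum_pm_cmult: "sum_pm (\<lambda>x. c * f x) A = c * sum_pm f A"
  unfolding sum_pm_def by (rule infsum_cmult_right')

lemma sum_pm_reindex:
  assumes inj: "inj \<phi>" and zero: "\<phi> 0 = 0" and odd: "\<And>z. \<phi> (- z) = - \<phi> z"
    and even: "\<And>x. f (- x) = f x"
  shows "sum_pm f (\<phi> ` A) = sum_pm (\<lambda>z. f (\<phi> z)) A"
proof -
  define CA where "CA = {{z, - z} |z. z \<in> A - {0}}"
  define CB where "CB = {{v, - v} |v. v \<in> \<phi> ` A - {0}}"
  have "(\<lambda>C. \<phi> ` C) ` CA = CB"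
  proof
    show "(\<lambda>C. \<phi> ` C) ` CA \<subseteq> CB"
    proof
      fix D assume "D \<in> (\<lambda>C. \<phi> ` C) ` CA"
      then obtain z where z: "z \<in> A" "z \<noteq> 0" "D = \<phi> ` {z, - z}" unfolding CA_def by blast
      then have "\<phi> z \<noteq> 0" using inj zero by (metis injD)
      then show "D \<in> CB" unfolding CB_def using z odd by auto
    qed
    show "CB \<subseteq> (\<lambda>C. \<phi> ` C) ` CA"
    proof
      fix D assume "D \<in> CB"
      then obtain z where z: "z \<in> A" "\<phi> z \<noteq> 0" "D = {\<phi> z, - \<phi> z}" unfolding CB_def by blast
      then have "z \<noteq> 0" "D = \<phi> ` {z, - z}" using zero odd by auto
      then show "D \<in> (\<lambda>C. \<phi> ` C) ` CA" unfolding CA_def using z(1) by blast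
    qed
  qed
  then have bij: "bij_betw (\<lambda>C. \<phi> ` C) CA CB"
    unfolding bij_betw_def using inj_on_image[of \<phi> CA] by (simp add: inj_on_subset[OF inj])
  have "sum_pm f (\<phi> ` A) = infsum (\<lambda>C. f (SOME v. v \<in> \<phi> ` C)) CA"
    unfolding sum_pm_def CB_def[symmetric]
    using infsum_reindex_bij_betw[OF bij, of "\<lambda>C. f (SOME v. v \<in> C)"] by simp
  also have "\<dots> = infsum (\<lambda>C. f (\<phi> (SOME w. w \<in> C))) CA"
  proof (rule infsum_cong)
    fix C assume "C \<in> CA"
    then obtain z where C: "C = {z, - z}" unfolding CA_def by blast
    have "f (SOME v. v \<in> \<phi> ` C) = f (\<phi> z)" using some_in_pm_class[of f, OF even] C odd by simp
    also have "\<dots> = f (\<phi> (SOME w. w \<in> C))"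
      using some_in_pm_class[of "\<lambda>w. f (\<phi> w)" z] C odd even by simp
    finally show "f (SOME v. v \<in> \<phi> ` C) = f (\<phi> (SOME w. w \<in> C))" .
  qed
  finally show ?thesis unfolding sum_pm_def CA_def .
qed

text \<open>A sum of terms with non-negative real part has non-negative real part (also when
  the sum diverges, since it is then 0 by convention).\<close>
lemma sum_pm_Re_nonneg:
  assumes "\<And>x. Re (f x) \<ge> 0"
  shows "Re (sum_pm f A) \<ge> 0"
proof (cases "(\<lambda>C. f (SOME x. x \<in> C)) summable_on {{x, - x} |x. x \<in> A - {0}}")
  case True
  have "Re (sum_pm f A) = infsum (\<lambda>C. Re (f (SOME x. x \<in> C))) {{x, - x} |x. x \<in> A - {0}}"
    unfolding sum_pm_def using infsum_Re[OF True] by simp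
  also have "\<dots> \<ge> 0" using assms by (intro infsum_nonneg) auto
  finally show ?thesis .
qed (simp add: sum_pm_def infsum_not_exists)

lemma powr_of_square_product:
  fixes s :: complex and n K Q :: real
  assumes n: "n > 0" and K: "K > 0" and Q: "Q > 0" and e: "n^2 = K * Q"
  shows "complex_of_real n powr (- 2 * s) = complex_of_real (1/K) powr s * complex_of_real Q powr (- s)"
proof -
  have "2 * ln n = ln K + ln Q" using arg_cong[OF e, of ln] n K Q by (simp add: ln_realpow ln_mult)
  then have "complex_of_real (2 * ln n) = complex_of_real (ln K + ln Q)" by simp
  then have "2 * complex_of_real (ln n) = of_real (ln K) + of_real (ln Q)" by simp
  then have e4: "(- 2 * s) * of_real (ln n) = s * of_real (- ln K) + (- s) * of_real (ln Q)"
    by (simp add: algebra_simps)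
  have e1: "complex_of_real n powr (- 2 * s) = exp ((- 2 * s) * of_real (ln n))"
    unfolding powr_def using n by (simp add: Ln_of_real)
  have e2: "complex_of_real (1/K) powr s = exp (s * of_real (- ln K))"
  proof -
    have "ln (complex_of_real (1/K)) = of_real (ln (1/K))" by (rule Ln_of_real) (use K in simp)
    then have "ln (complex_of_real (1/K)) = of_real (- ln K)" using K by (simp add: ln_div)
    moreover have "complex_of_real (1/K) \<noteq> 0" using K by simp
    ultimately show ?thesis unfolding powr_def by (simp only: if_False)
  qed
  have e3: "complex_of_real Q powr (- s) = exp ((- s) * of_real (ln Q))"
    unfolding powr_def using Q by (simp add: Ln_of_real)
  show ?thesis unfolding e1 e2 e3 e4 exp_add ..
qed

text \<open>The Epstein zeta function of a lattice with a (p,q)-basis of scale k is \<open>k^{-s}\<close> times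
  the zeta function of \<open>Q_{p,q}\<close>: both are sums of the norm form over \<open>(\<int>\<^sup>2 - 0)/\<plusminus>1\<close>.\<close>
lemma epstein_pq_basis:
  assumes lb: "lattice_basis L x y" and B: "pq_basis p q k x y" and k: "k > 0"
  shows "epstein L s = complex_of_real (1/k) powr s * Qpq_zeta p q s"
proof -
  define \<phi> where "\<phi> = coord_map x y"
  have inj: "inj \<phi>" and L_img: "L = range \<phi>" using coord_map_lattice[OF lb] unfolding \<phi>_def by auto
  have zero: "\<phi> 0 = 0" and odd: "\<phi> (- z) = - \<phi> z" for z
    unfolding \<phi>_def coord_map_def by (simp_all add: algebra_simps)
  define G where "G = (\<lambda>(i::int, j::int). complex_of_real (Qpq p q (of_int i) (of_int j)) powr (- s))"
  have term_eq: "complex_of_real (norm (\<phi> z)) powr (- 2 * s) = complex_of_real (1/k) powr s * G z"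
    if "z \<noteq> 0" for z
  proof -
    obtain i j where z: "z = (i, j)" by (cases z)
    have n0: "norm (\<phi> z) > 0" using inj zero that by (metis injD zero_less_norm_iff)
    have e: "(norm (\<phi> z))^2 = k * Qpq p q (of_int i) (of_int j)"
      using norm_form_pq_basis[OF B] unfolding norm_form_def \<phi>_def coord_map_def z by simp
    have "0 < (norm (\<phi> z))^2" using n0 by simp
    then have "Qpq p q (of_int i) (of_int j) > 0" using e k by (simp add: zero_less_mult_iff)
    moreover have "G z = complex_of_real (Qpq p q (of_int i) (of_int j)) powr (- s)"
      unfolding G_def z by simp
    ultimately show ?thesis using powr_of_square_product[OF n0 k _ e] by simp
  qed
  have "epstein L s = sum_pm (\<lambda>z. complex_of_real (norm (\<phi> z)) powr (- 2 * s)) UNIV"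
    unfolding epstein_def L_img by (rule sum_pm_reindex[OF inj zero odd]) simp
  also have "\<dots> = sum_pm (\<lambda>z. complex_of_real (1/k) powr s * G z) UNIV"
    by (rule sum_pm_cong) (rule term_eq)
  also have "\<dots> = complex_of_real (1/k) powr s * Qpq_zeta p q s"
    unfolding sum_pm_cmult Qpq_zeta_def G_def ..
  finally show ?thesis .
qed

lemma Qpq_zeta_Re_nonneg:
  assumes "\<And>x y. Qpq p q x y \<ge> 0"
  shows "Re (Qpq_zeta p q (complex_of_real s)) \<ge> 0"
  unfolding Qpq_zeta_def
proof (rule sum_pm_Re_nonneg)
  fix z :: "int \<times> int"
  obtain i j where z: "z = (i, j)" by (cases z)
  have "complex_of_real (Qpq p q (of_int i) (of_int j)) powr (- complex_of_real s)
      = complex_of_real (Qpq p q (of_int i) (of_int j) powr (- s))"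
    using powr_of_real[OF assms[of "of_int i" "of_int j"], of "- s"] by simp
  then show "Re ((\<lambda>(i, j). complex_of_real (Qpq p q (of_int i) (of_int j)) powr - complex_of_real s) z) \<ge> 0"
    unfolding z by simp
qed

section \<open>Every lattice of C(p,q) is a scaled rotation of \<open>\<Lambda>_{p,q}\<close>\<close>

text \<open>Let (a, b) be a (p,q)-basis of scale 1 spanning \<open>\<Lambda>\<close>.  For \<open>L \<in> C(p,q)\<close> with a minimal
  (p,q)-basis (x, y) of scale k, the transfer map \<open>(a, b) \<mapsto> (x, y)\<close> is \<open>sqrt k\<close> times an
  orthogonal map, and \<open>k = det L / p\<close>.\<close>
lemma C_set_vs_pq_lattice:
  assumes S: "in_S p q" and B: "pq_basis p q 1 a b" and d: "det2 a b \<noteq> 0" and L: "L \<in> C_set p q"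
  shows "\<exists>U. orthogonal_transformation U \<and> L = (\<lambda>v. sqrt (lat_det L / real p) *\<^sub>R U v) ` lat_gen a b"
    "\<exists>x y. minimal_basis L x y \<and> (\<forall>X Y. norm_form x y X Y = lat_det L / real p * Qpq p q X Y)"
    "epstein L s = complex_of_real (real p / lat_det L) powr s * Qpq_zeta p q s"
    "real p \<le> lat_det L" "sqrt (real q) \<le> lat_min L"
proof -
  obtain k :: nat and x y where k1: "k \<ge> 1" and Dk: "lat_det L = real k * real p"
    and mk: "lat_min L = sqrt (real k * real q)" and mb: "minimal_basis L x y"
    and Bxy: "pq_basis p q (real k) x y"
    using C_set_pq_basis[OF S L] by blast
  have lb: "lattice_basis L x y" using mb unfolding minimal_basis_def by simp
  have p0: "real p > 0" using in_S_basic(1)[OF S] by simp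
  have k_eq: "lat_det L / real p = real k" using Dk p0 by simp
  show "\<exists>x y. minimal_basis L x y \<and> (\<forall>X Y. norm_form x y X Y = lat_det L / real p * Qpq p q X Y)"
    using mb norm_form_pq_basis[OF Bxy] unfolding k_eq by blast
  show "real p \<le> lat_det L" using Dk k1 p0 by simp
  have "real q \<le> real k * real q" using k1 by (simp add: mult_le_cancel_right1)
  then show "sqrt (real q) \<le> lat_min L" unfolding mk by simp
  define c where "c = sqrt (real k)"
  have c0: "c > 0" and c2: "c^2 = real k" unfolding c_def using k1 by auto
  have "orthogonal_transformation (\<lambda>v. (1/c) *\<^sub>R basis_map a b x y v)"
    using B Bxy by (intro basis_map_orthogonal[OF d c0]) (simp_all add: pq_basis_def c2)
  moreover have "(\<lambda>v. c *\<^sub>R ((1/c) *\<^sub>R basis_map a b x y v)) ` lat_gen a b = L"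
    using basis_map_lattice[OF d] lb c0 unfolding lattice_basis_def by simp
  ultimately show "\<exists>U. orthogonal_transformation U \<and> L = (\<lambda>v. sqrt (lat_det L / real p) *\<^sub>R U v) ` lat_gen a b"
    unfolding k_eq c_def[symmetric] by metis
  have "1 / real k = real p / lat_det L" using Dk p0 by simp
  then show "epstein L s = complex_of_real (real p / lat_det L) powr s * Qpq_zeta p q s"
    using epstein_pq_basis[OF lb Bxy] k1 by simp
qed

text \<open>Lattices of C(p,q) with the same determinant p as \<open>\<Lambda>\<close> are images of \<open>\<Lambda>\<close> under an
  orthogonal map with rational matrix: the transfer map between two integral bases.\<close>
lemma C_set_rational_rotation:
  assumes S: "in_S p q" and Z: "a \<in> Z2" "b \<in> Z2" and B: "pq_basis p q 1 a b" and d: "det2 a b \<noteq> 0"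
    and L: "L \<in> C_set p q" and D: "lat_det L = real p"
  shows "\<exists>U. orthogonal_transformation U
              \<and> fst (U (1,0)) \<in> \<rat> \<and> snd (U (1,0)) \<in> \<rat>
              \<and> fst (U (0,1)) \<in> \<rat> \<and> snd (U (0,1)) \<in> \<rat>
              \<and> L = U ` lat_gen a b"
proof -
  obtain k :: nat and x y where Dk: "lat_det L = real k * real p"
    and mb: "minimal_basis L x y" and Bxy: "pq_basis p q (real k) x y"
    using C_set_pq_basis[OF S L] by blast
  have "real k = 1" using Dk D in_S_basic(1)[OF S] by simp
  then have Bxy1: "pq_basis p q 1 x y" using Bxy by simp
  have lb: "lattice_basis L x y" using mb unfolding minimal_basis_def by simp
  have "L \<subseteq> Z2" using L unfolding C_set_def WR_Z2_def by simp
  then have xyZ: "x \<in> Z2" "y \<in> Z2" using lb lat_gen_a lat_gen_b unfolding lattice_basis_def by blast+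
  have "orthogonal_transformation (\<lambda>v. (1/1) *\<^sub>R basis_map a b x y v)"
    using B Bxy1 by (intro basis_map_orthogonal[OF d]) (simp_all add: pq_basis_def)
  moreover have "basis_map a b x y ` lat_gen a b = L"
    using basis_map_lattice[OF d] lb unfolding lattice_basis_def by simp
  moreover have "(1::real, 0::real) \<in> Z2" "(0::real, 1::real) \<in> Z2" using Z2I[of 1 0] Z2I[of 0 1] by simp_all
  ultimately show ?thesis
    using basis_map_rational[OF Z xyZ] by (intro exI[of _ "basis_map a b x y"]) simp
qed

lemma Re_powr_scaled_le:
  fixes s t :: real
  assumes "0 < t" "t \<le> 1" "0 \<le> s" "Re z \<ge> 0"
  shows "Re (complex_of_real t powr complex_of_real s * z) \<le> Re z"
proof -
  have "complex_of_real t powr complex_of_real s = complex_of_real (t powr s)"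
    using powr_of_real[of t s] assms(1) by simp
  moreover have "t powr s \<le> 1" using assms by (simp add: powr_le1)
  ultimately show ?thesis using assms(4) by (simp add: mult_left_le_one_le)
qed

text \<open>Hence, for real \<open>s \<ge> 0\<close>, \<open>\<Lambda>\<close> maximises the Epstein zeta function on C(p,q): the
  zeta function of \<open>L\<close> is that of \<open>\<Lambda>\<close> scaled by \<open>(p / det L)^s \<le> 1\<close>.\<close>
lemma C_set_epstein_le_pq_lattice:
  fixes s :: real
  assumes S: "in_S p q" and B: "pq_basis p q 1 a b" and d: "det2 a b \<noteq> 0"
    and L: "L \<in> C_set p q" and s: "s \<ge> 0"
  shows "Re (epstein L (of_real s)) \<le> Re (epstein (lat_gen a b) (of_real s))"
proof -
  have "Re (Qpq_zeta p q (of_real s)) \<ge> 0"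
    using norm_form_pq_basis[OF B] by (intro Qpq_zeta_Re_nonneg) (metis norm_form_def zero_le_power2 mult_1)
  moreover have "0 < real p / lat_det L" "real p / lat_det L \<le> 1"
    using C_set_vs_pq_lattice(4)[OF S B d L] in_S_basic(1)[OF S] by simp_all
  ultimately have "Re (complex_of_real (real p / lat_det L) powr of_real s * Qpq_zeta p q (of_real s))
      \<le> Re (Qpq_zeta p q (of_real s))"
    using s by (intro Re_powr_scaled_le)
  moreover have "epstein (lat_gen a b) (of_real s) = Qpq_zeta p q (of_real s)"
    using epstein_pq_basis[OF _ B] d unfolding lattice_basis_def by simp
  ultimately show ?thesis unfolding C_set_vs_pq_lattice(3)[OF S B d L] by simp
qed

theorem theorem1p3:
  fixes p q :: nat
  assumes "in_S p q"
  shows "\<exists>\<Lambda>. \<Lambda> \<in> C_set p q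
    \<and> lat_min \<Lambda> = sqrt (real q) \<and> (\<forall>L\<in>C_set p q. lat_min \<Lambda> \<le> lat_min L)
    \<and> lat_det \<Lambda> = real p \<and> (\<forall>L\<in>C_set p q. lat_det \<Lambda> \<le> lat_det L)
    \<and> (\<exists>a b. minimal_basis \<Lambda> a b \<and> (\<forall>x y. norm_form a b x y = Qpq p q x y))
    \<and> (\<forall>L\<in>C_set p q.
         (\<exists>U. orthogonal_transformation U \<and>
              L = (\<lambda>v. sqrt (lat_det L / real p) *\<^sub>R U v) ` \<Lambda>)
       \<and> (\<exists>a b. minimal_basis L a b \<and>
              (\<forall>x y. norm_form a b x y = lat_det L / real p * Qpq p q x y)))
    \<and> (\<forall>L\<in>C_set p q. \<forall>s::complex. Re s > 1 \<longrightarrow>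
         epstein L s = complex_of_real (real p / lat_det L) powr s * Qpq_zeta p q s)
    \<and> (\<forall>s::real. s > 1 \<longrightarrow>
         (\<forall>L\<in>C_set p q. Re (epstein L (of_real s)) \<le> Re (epstein \<Lambda> (of_real s))))
    \<and> (\<forall>\<Lambda>'\<in>C_set p q. lat_min \<Lambda>' = sqrt (real q) \<and> lat_det \<Lambda>' = real p \<longrightarrow>
         (\<exists>U. orthogonal_transformation U
              \<and> fst (U (1,0)) \<in> \<rat> \<and> snd (U (1,0)) \<in> \<rat>
              \<and> fst (U (0,1)) \<in> \<rat> \<and> snd (U (0,1)) \<in> \<rat>
              \<and> \<Lambda>' = U ` \<Lambda>))"
proof -
  obtain a b where Z: "a \<in> Z2" "b \<in> Z2" and B: "pq_basis p q 1 a b" and dab: "\<bar>det2 a b\<bar> = real p"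
    using integral_pq_basis_exists[OF assms] by blast
  have d: "det2 a b \<noteq> 0" using dab in_S_basic(1)[OF assms] by simp
  define \<Lambda> where "\<Lambda> = lat_gen a b"
  note \<Lambda>_props = pq_lattice_properties[OF assms Z B dab, folded \<Lambda>_def]
  note rel = C_set_vs_pq_lattice[OF assms B d, folded \<Lambda>_def]
  have least: "\<forall>L\<in>C_set p q. lat_min \<Lambda> \<le> lat_min L" "\<forall>L\<in>C_set p q. lat_det \<Lambda> \<le> lat_det L"
    using rel(4,5) \<Lambda>_props(2,3) by simp_all
  have "\<exists>a b. minimal_basis \<Lambda> a b \<and> (\<forall>x y. norm_form a b x y = Qpq p q x y)"
    using \<Lambda>_props(4) norm_form_pq_basis[OF B] by (metis mult_1)
  moreover have "\<forall>s::real. s > 1 \<longrightarrow>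
      (\<forall>L\<in>C_set p q. Re (epstein L (of_real s)) \<le> Re (epstein \<Lambda> (of_real s)))"
    using C_set_epstein_le_pq_lattice[OF assms B d] unfolding \<Lambda>_def by simp
  moreover have "\<forall>\<Lambda>'\<in>C_set p q. lat_min \<Lambda>' = sqrt (real q) \<and> lat_det \<Lambda>' = real p \<longrightarrow>
      (\<exists>U. orthogonal_transformation U \<and> fst (U (1,0)) \<in> \<rat> \<and> snd (U (1,0)) \<in> \<rat>
         \<and> fst (U (0,1)) \<in> \<rat> \<and> snd (U (0,1)) \<in> \<rat> \<and> \<Lambda>' = U ` \<Lambda>)"
    using C_set_rational_rotation[OF assms Z B d, folded \<Lambda>_def] by blast
  ultimately show ?thesis
    using \<Lambda>_props(1-3) least rel(1-3) by (intro exI[of _ \<Lambda>] conjI) auto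
qed

end
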